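(* Let $(X,\perp,Y,T)$ be an implicative frame, and for $A,C\in\mathcal{G}(X)$ let $A\Rightarrow C={}'(A\blacktriangleright C')$. Then: (1) for families $A_i\in\mathcal{G}(X)$ ($i\in I$), $C_j\in\mathcal{G}(X)$ ($j\in J$): $\left(\bigvee_{i}A_i\right)\Rightarrow\left(\bigcap_{j}C_j\right)=\bigcap_{i\in I,j\in J}(A_i\Rightarrow C_j)$; (2) $A\Rightarrow C=\bigcap\{\Gamma x\Rightarrow{}'\{y\}: x\in A,\ y\in Y,\ C\perp y\}$; (3) for all $u,x\in X$ and $y\in Y$: $uT'xy$ iff $u\in(\Gamma x\Rightarrow{}'\{y\})$; (4) $u\in(A\Rightarrow C)$ iff for all $x\in X$ and $y\in Y$, if $x\in A$ and $C\perp y$ then $uT'xy$; (5) for any $A,C\in\mathcal{G}(X)$: $A\subseteq C$ iff $X\subseteq A\Rightarrow C$.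
   Context: A sorted frame (polarity) is a triple $(X,\perp,Y)$ with $X,Y$ nonempty sets and ${\perp}\subseteq X\times Y$. For $U\subseteq X$ let $U'=\{y\in Y:\forall x\in U\ x\perp y\}$, and for $V\subseteq Y$ let ${}'V=\{x\in X:\forall y\in V\ x\perp y\}$. $A\subseteq X$ is stable if $A={}'(A')$; $B\subseteq Y$ is co-stable if $B=({}'B)'$. $\mathcal{G}(X)$, $\mathcal{G}(Y)$ are the complete lattices of stable, resp. co-stable, sets under inclusion (meets are intersections; the join of a family is the closure of its union, where the closure of $W\subseteq X$ is ${}'(W')$ and of $W\subseteq Y$ is $W''=({}'W)'$). For $A\in\mathcal G(X)$, $y\in Y$, $A\perp y$ means $x\perp y$ for all $x\in A$. Preorders: for $x,z\in X$, $x\le z$ iff $\{x\}'\subseteq\{z\}'$; for $y,v\in Y$, $y\le v$ iff ${}'\{y\}\subseteq{}'\{v\}$; the frame is separated if both are partial orders. $\Gamma u$ is the set of elements (of the same sort) above $u$. For $T\subseteq Y\times X\times Y$ (write $yTxv$), its Galois dual $T'\subseteq X\times X\times Y$ is given by $uT'xv$ iff $\forall y\in Y\,(yTxv\Rightarrow u\perp y)$. An implicative frame is $(X,\perp,Y,T)$ with $T\subseteq Y\times X\times Y$ such that: (F0) for all $x\in X,y\in Y$: $x\perp y$ iff $uT'xy$ for all $u\in X$; (F1) the frame is separated; (F2) for all $x\in X,v\in Y$ the set $\{y\in Y: yTxv\}$ equals $\Gamma w$ for some $w\in Y$; (F3) for each $y\in Y$, if $yTxv$, $x_1\le x$ and $v_1\le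 v$ then $yTx_1v_1$; (F4) for all $u,x\in X$ and $v\in Y$, the set $\{x_1\in X:uT'x_1v\}$ is stable and the set $\{v_1\in Y:uT'xv_1\}$ is co-stable. For $A\in\mathcal{G}(X)$, $B\in\mathcal{G}(Y)$ define $A\blacktriangleright B=\left(\{y\in Y:\exists x\in A\,\exists v\in B\ yTxv\}\right)''$. *)

theory Defs
  imports Main
begin

text \<open>A sorted frame (X, perp, Y): X is the universe of type 'x, Y the universe of
type 'y (both nonempty automatically), and perp is R :: 'x => 'y => bool.\<close>

definition upper :: "('x \<Rightarrow> 'y \<Rightarrow> bool) \<Rightarrow> 'x set \<Rightarrow> 'y set" where
  "upper R U = {y. \<forall>x\<in>U. R x y}"

definition lower :: "('x \<Rightarrow> 'y \<Rightarrow> bool) \<Rightarrow> 'y set \<Rightarrow> 'x set" where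
  "lower R V = {x. \<forall>y\<in>V. R x y}"

definition stable :: "('x \<Rightarrow> 'y \<Rightarrow> bool) \<Rightarrow> 'x set \<Rightarrow> bool" where
  "stable R A \<longleftrightarrow> A = lower R (upper R A)"

definition costable :: "('x \<Rightarrow> 'y \<Rightarrow> bool) \<Rightarrow> 'y set \<Rightarrow> bool" where
  "costable R B \<longleftrightarrow> B = upper R (lower R B)"

definition joinX :: "('x \<Rightarrow> 'y \<Rightarrow> bool) \<Rightarrow> 'x set set \<Rightarrow> 'x set" where
  "joinX R F = lower R (upper R (\<Union>F))"

definition leX :: "('x \<Rightarrow> 'y \<Rightarrow> bool) \<Rightarrow> 'x \<Rightarrow> 'x \<Rightarrow> bool" where
  "leX R x z \<longleftrightarrow> upper R {x} \<subseteq> upper R {z}"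

definition leY :: "('x \<Rightarrow> 'y \<Rightarrow> bool) \<Rightarrow> 'y \<Rightarrow> 'y \<Rightarrow> bool" where
  "leY R y v \<longleftrightarrow> lower R {y} \<subseteq> lower R {v}"

definition GammaX :: "('x \<Rightarrow> 'y \<Rightarrow> bool) \<Rightarrow> 'x \<Rightarrow> 'x set" where
  "GammaX R x = {z. leX R x z}"

definition GammaY :: "('x \<Rightarrow> 'y \<Rightarrow> bool) \<Rightarrow> 'y \<Rightarrow> 'y set" where
  "GammaY R y = {v. leY R y v}"

definition separated :: "('x \<Rightarrow> 'y \<Rightarrow> bool) \<Rightarrow> bool" where
  "separated R \<longleftrightarrow> (\<forall>x z. leX R x z \<and> leX R z x \<longrightarrow> x = z) \<and>
                     (\<forall>y v. leY R y v \<and> leY R v y \<longrightarrow> y = v)"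

text \<open>Galois dual T' of T (T y x v means yTxv): u T' x v.\<close>
definition Tdual :: "('x \<Rightarrow> 'y \<Rightarrow> bool) \<Rightarrow> ('y \<Rightarrow> 'x \<Rightarrow> 'y \<Rightarrow> bool) \<Rightarrow> 'x \<Rightarrow> 'x \<Rightarrow> 'y \<Rightarrow> bool" where
  "Tdual R T u x v \<longleftrightarrow> (\<forall>y. T y x v \<longrightarrow> R u y)"

definition implicative_frame :: "('x \<Rightarrow> 'y \<Rightarrow> bool) \<Rightarrow> ('y \<Rightarrow> 'x \<Rightarrow> 'y \<Rightarrow> bool) \<Rightarrow> bool" where
  "implicative_frame R T \<longleftrightarrow>
     (\<forall>x y. R x y \<longleftrightarrow> (\<forall>u. Tdual R T u x y)) \<and>
     separated R \<and>
     (\<forall>x v. \<exists>w. {y. T y x v} = GammaY R w) \<and>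
     (\<forall>y x v x1 v1. T y x v \<and> leX R x1 x \<and> leY R v1 v \<longrightarrow> T y x1 v1) \<and>
     (\<forall>u x v. stable R {x1. Tdual R T u x1 v} \<and> costable R {v1. Tdual R T u x v1})"

definition tri :: "('x \<Rightarrow> 'y \<Rightarrow> bool) \<Rightarrow> ('y \<Rightarrow> 'x \<Rightarrow> 'y \<Rightarrow> bool) \<Rightarrow> 'x set \<Rightarrow> 'y set \<Rightarrow> 'y set" where
  "tri R T A B = upper R (lower R {y. \<exists>x\<in>A. \<exists>v\<in>B. T y x v})"

definition imp :: "('x \<Rightarrow> 'y \<Rightarrow> bool) \<Rightarrow> ('y \<Rightarrow> 'x \<Rightarrow> 'y \<Rightarrow> bool) \<Rightarrow> 'x set \<Rightarrow> 'x set \<Rightarrow> 'x set" where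
  "imp R T A C = lower R (tri R T A (upper R C))"

end

theory Submission
  imports Defs
begin

text \<open>Unfolding the two closures, \<open>u \<in> A \<Rightarrow> C\<close> says exactly that \<open>u T' x v\<close> holds for all
  \<open>x \<in> A\<close> and \<open>v \<in> C'\<close>. Everything then follows from properties of the relation \<open>T'\<close>:
  by (F3) it is antitone in \<open>x\<close> and \<open>v\<close>, which gives (2)-(4) with principal sets; by (F4) its
  sections are (co-)stable, so the condition may be tested on generators of the closures,
  which gives (1); and by (F0) \<open>\<forall>u. u T' x v\<close> is \<open>x \<perp> v\<close>, which gives (5).\<close>

lemma implicative_frame_perp_iff_Tdual:
  "implicative_frame R T \<Longrightarrow> R x y \<longleftrightarrow> (\<forall>u. Tdual R T u x y)"
  unfolding implicative_frame_def by blast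

lemma implicative_frame_T_antitone:
  "implicative_frame R T \<Longrightarrow> T z x v \<Longrightarrow> leX R x1 x \<Longrightarrow> leY R v1 v \<Longrightarrow> T z x1 v1"
  unfolding implicative_frame_def by blast

lemma implicative_frame_stable_Tdual:
  "implicative_frame R T \<Longrightarrow> stable R {x. Tdual R T u x v}"
  unfolding implicative_frame_def by blast

lemma implicative_frame_costable_Tdual:
  "implicative_frame R T \<Longrightarrow> costable R {v. Tdual R T u x v}"
  unfolding implicative_frame_def by blast

lemma lower_upper_least: "stable R S \<Longrightarrow> W \<subseteq> S \<Longrightarrow> lower R (upper R W) \<subseteq> S"
  unfolding stable_def upper_def lower_def by blast

lemma upper_lower_least: "costable R S \<Longrightarrow> V \<subseteq> S \<Longrightarrow> upper R (lower R V) \<subseteq> S"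
  unfolding costable_def upper_def lower_def by blast

lemma upper_lower_singleton: "upper R (lower R {y}) = GammaY R y"
  unfolding GammaY_def leY_def upper_def lower_def by auto

lemma mem_GammaX_self: "x \<in> GammaX R x"
  by (simp add: GammaX_def leX_def)

lemma mem_GammaY_self: "y \<in> GammaY R y"
  by (simp add: GammaY_def leY_def)

lemma INT_stable_eq_lower_UN_upper:
  "(\<forall>j\<in>J. stable R (C j)) \<Longrightarrow> (\<Inter>j\<in>J. C j) = lower R (\<Union>j\<in>J. upper R (C j))"
  unfolding stable_def lower_def by auto

lemma mem_imp_iff: "u \<in> imp R T A C \<longleftrightarrow> (\<forall>x\<in>A. \<forall>v\<in>upper R C. Tdual R T u x v)"
  unfolding imp_def tri_def upper_def lower_def Tdual_def by blast

lemma Tdual_antitone: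
  assumes "implicative_frame R T" "Tdual R T u x v" "leX R x x1" "leY R v v1"
  shows "Tdual R T u x1 v1"
  using assms implicative_frame_T_antitone[OF assms(1)] unfolding Tdual_def by blast

lemma Tdual_iff_mem_imp_principal:
  assumes frame: "implicative_frame R T"
  shows "Tdual R T u x y \<longleftrightarrow> u \<in> imp R T (GammaX R x) (lower R {y})"
proof -
  have "Tdual R T u x y \<longleftrightarrow> (\<forall>x1\<in>GammaX R x. \<forall>v\<in>GammaY R y. Tdual R T u x1 v)"
  proof
    assume "Tdual R T u x y"
    then show "\<forall>x1\<in>GammaX R x. \<forall>v\<in>GammaY R y. Tdual R T u x1 v"
      unfolding GammaX_def GammaY_def using Tdual_antitone[OF frame] by blast
  next
    assume "\<forall>x1\<in>GammaX R x. \<forall>v\<in>GammaY R y. Tdual R T u x1 v"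
    then show "Tdual R T u x y"
      by (simp add: mem_GammaX_self mem_GammaY_self)
  qed
  then show ?thesis
    by (simp only: mem_imp_iff upper_lower_singleton)
qed

lemma imp_eq_INT_imp_principal:
  assumes "implicative_frame R T"
  shows "imp R T A C = \<Inter>{imp R T (GammaX R x) (lower R {y}) | x y. x \<in> A \<and> y \<in> upper R C}"
proof (rule set_eqI)
  fix u
  have "u \<in> imp R T A C \<longleftrightarrow> (\<forall>x\<in>A. \<forall>y\<in>upper R C. Tdual R T u x y)"
    by (rule mem_imp_iff)
  also have "\<dots> \<longleftrightarrow> (\<forall>x\<in>A. \<forall>y\<in>upper R C. u \<in> imp R T (GammaX R x) (lower R {y}))"
    by (simp only: Tdual_iff_mem_imp_principal[OF assms])
  finally show "u \<in> imp R T A C \<longleftrightarrow> u \<in> \<Inter>{imp R T (GammaX R x) (lower R {y}) | x y. x \<in> A \<and> y \<in> upper R C}"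
    by blast
qed

lemma Tdual_closure:
  assumes frame: "implicative_frame R T"
    and Tdual: "\<forall>x\<in>W. \<forall>v\<in>V. Tdual R T u x v"
    and x: "x \<in> lower R (upper R W)" and v: "v \<in> upper R (lower R V)"
  shows "Tdual R T u x v"
proof -
  have "upper R (lower R V) \<subseteq> {v. Tdual R T u x' v}" if "x' \<in> W" for x'
    using that Tdual upper_lower_least[OF implicative_frame_costable_Tdual[OF frame]] by blast
  then have "lower R (upper R W) \<subseteq> {x. Tdual R T u x v}"
    using v lower_upper_least[OF implicative_frame_stable_Tdual[OF frame]] by blast
  then show ?thesis
    using x by blast
qed

lemma mem_imp_closure_iff:
  assumes "implicative_frame R T"
  shows "u \<in> imp R T (lower R (upper R W)) (lower R V) \<longleftrightarrow> (\<forall>x\<in>W. \<forall>v\<in>V. Tdual R T u x v)"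
proof -
  have "W \<subseteq> lower R (upper R W)" "V \<subseteq> upper R (lower R V)"
    unfolding upper_def lower_def by auto
  then show ?thesis
    unfolding mem_imp_iff using Tdual_closure[OF assms] by blast
qed

lemma imp_joinX_INT:
  assumes frame: "implicative_frame R T" and stable: "\<forall>j\<in>J. stable R (C j)"
  shows "imp R T (joinX R (A ` I)) (\<Inter>j\<in>J. C j) = (\<Inter>i\<in>I. \<Inter>j\<in>J. imp R T (A i) (C j))"
proof (rule set_eqI)
  fix u
  have "u \<in> imp R T (joinX R (A ` I)) (\<Inter>j\<in>J. C j)
      \<longleftrightarrow> (\<forall>x\<in>\<Union>(A ` I). \<forall>v\<in>\<Union>j\<in>J. upper R (C j). Tdual R T u x v)"
    unfolding joinX_def INT_stable_eq_lower_UN_upper[OF stable]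
    by (rule mem_imp_closure_iff[OF frame])
  also have "\<dots> \<longleftrightarrow> (\<forall>i\<in>I. \<forall>j\<in>J. \<forall>x\<in>A i. \<forall>v\<in>upper R (C j). Tdual R T u x v)"
    by blast
  also have "\<dots> \<longleftrightarrow> u \<in> (\<Inter>i\<in>I. \<Inter>j\<in>J. imp R T (A i) (C j))"
    by (simp add: mem_imp_iff)
  finally show "u \<in> imp R T (joinX R (A ` I)) (\<Inter>j\<in>J. C j)
      \<longleftrightarrow> u \<in> (\<Inter>i\<in>I. \<Inter>j\<in>J. imp R T (A i) (C j))" .
qed

lemma subset_iff_UNIV_subset_imp:
  assumes "implicative_frame R T" "stable R C"
  shows "A \<subseteq> C \<longleftrightarrow> UNIV \<subseteq> imp R T A C"
proof -
  have "UNIV \<subseteq> imp R T A C \<longleftrightarrow> (\<forall>x\<in>A. \<forall>v\<in>upper R C. \<forall>u. Tdual R T u x v)"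
    unfolding subset_iff mem_imp_iff by blast
  also have "\<dots> \<longleftrightarrow> (\<forall>x\<in>A. \<forall>v\<in>upper R C. R x v)"
    by (simp add: implicative_frame_perp_iff_Tdual[OF assms(1)])
  also have "\<dots> \<longleftrightarrow> A \<subseteq> lower R (upper R C)"
    by (auto simp: lower_def)
  finally show ?thesis
    using assms(2) by (simp add: stable_def)
qed

theorem proposition3p6:
  fixes R :: "'x \<Rightarrow> 'y \<Rightarrow> bool" and T :: "'y \<Rightarrow> 'x \<Rightarrow> 'y \<Rightarrow> bool"
  assumes frame: "implicative_frame R T"
  shows
    "(\<forall>(I :: 'i set) (J :: 'j set) (A :: 'i \<Rightarrow> 'x set) (C :: 'j \<Rightarrow> 'x set).
        (\<forall>i\<in>I. stable R (A i)) \<longrightarrow> (\<forall>j\<in>J. stable R (C j)) \<longrightarrow>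
        imp R T (joinX R (A ` I)) (\<Inter>j\<in>J. C j) = (\<Inter>i\<in>I. \<Inter>j\<in>J. imp R T (A i) (C j)))
   \<and> (\<forall>A C. stable R A \<longrightarrow> stable R C \<longrightarrow>
        imp R T A C = \<Inter>{imp R T (GammaX R x) (lower R {y}) | x y. x \<in> A \<and> (\<forall>c\<in>C. R c y)})
   \<and> (\<forall>u x y. Tdual R T u x y \<longleftrightarrow> u \<in> imp R T (GammaX R x) (lower R {y}))
   \<and> (\<forall>A C u. stable R A \<longrightarrow> stable R C \<longrightarrow>
        (u \<in> imp R T A C \<longleftrightarrow> (\<forall>x y. x \<in> A \<longrightarrow> (\<forall>c\<in>C. R c y) \<longrightarrow> Tdual R T u x y)))
   \<and> (\<forall>A C. stable R A \<longrightarrow> stable R C \<longrightarrow> (A \<subseteq> C \<longleftrightarrow> UNIV \<subseteq> imp R T A C))"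
proof (intro conjI allI impI)
  fix I :: "'i set" and J :: "'j set" and A :: "'i \<Rightarrow> 'x set" and C :: "'j \<Rightarrow> 'x set"
  assume "\<forall>j\<in>J. stable R (C j)"
  then show "imp R T (joinX R (A ` I)) (\<Inter>j\<in>J. C j) = (\<Inter>i\<in>I. \<Inter>j\<in>J. imp R T (A i) (C j))"
    by (rule imp_joinX_INT[OF frame])
next
  fix A C :: "'x set"
  show "imp R T A C = \<Inter>{imp R T (GammaX R x) (lower R {y}) | x y. x \<in> A \<and> (\<forall>c\<in>C. R c y)}"
    using imp_eq_INT_imp_principal[OF frame, of A C] unfolding upper_def by simp
next
  fix u x y
  show "Tdual R T u x y \<longleftrightarrow> u \<in> imp R T (GammaX R x) (lower R {y})"
    by (rule Tdual_iff_mem_imp_principal[OF frame])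
next
  fix A C :: "'x set" and u
  show "u \<in> imp R T A C \<longleftrightarrow> (\<forall>x y. x \<in> A \<longrightarrow> (\<forall>c\<in>C. R c y) \<longrightarrow> Tdual R T u x y)"
    by (auto simp: mem_imp_iff upper_def)
next
  fix A C :: "'x set"
  assume "stable R C"
  then show "A \<subseteq> C \<longleftrightarrow> UNIV \<subseteq> imp R T A C"
    by (rule subset_iff_UNIV_subset_imp[OF frame])
qed

end
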